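(* Let $n\ge 2$ and let $E_1,\dots,E_n,H_1,\dots,H_n$ be logically independent events with $H_i\neq\emptyset$ for all $i$. Let $\mathcal F=\{E_1|H_1,\dots,E_n|H_n,\mathscr C_{1\cdots n}\}$ and let $\mathcal M=(x_1,\dots,x_n,x_{1\cdots n})\in\mathbb R^{n+1}$ be a prevision assessment on $\mathcal F$ (with $x_i=P(E_i|H_i)$, $x_{1\cdots n}=\mathbb P(\mathscr C_{1\cdots n})$). Let $\mathcal I^*\subseteq\mathbb R^{n+1}$ be the convex hull of the $2^n$ points $(q_1,\dots,q_n,q_1q_2\cdots q_n)$ with $(q_1,\dots,q_n)\in\{0,1\}^n$. If $\mathcal M\in\mathcal I^*$, then $\mathcal M$ is coherent.
   Context: Events are identified with their indicators; $\bar E$ is the negation of $E$ and $EH$ the conjunction. For events $E,H$ with $H\neq\emptyset$, the conditional event $E|H$ is true if $EH$ is true, false if $\bar EH$ is true, void if $\bar H$ is true; once $P(E|H)=x$ is assessed, $E|H$ is identified with the random quantity $EH+x\bar H$. More generally a finite conditional random quantity $X|H$ with assessed prevision $\mu=\mathbb P(X|H)$ is identified with $XH+\mu\bar H$. Coherence (de Finetti): a prevision assessment $(\mu_1,\dots,\mu_m)$ on a family $\{X_1|H_1,\dots,X_m|H_m\}$ is coherent iff for every choice of real stakes $s_1,\dots,s_m$ the random gain $G=\sum_{i}s_iH_i(X_i-\mu_i)$, restricted to the values it can take when $H_1\vee\dots\vee H_m$ is true, satisfies $\min G\le 0\le\max G$ (and the same holds for every subfamily). Events $E_1,\dots,E_n,H_1,\dots,H_n$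 are logically independent if all $2^{2n}$ conjunctions of these events or their negations are nonempty. Conjunction of $n$ conditional events: for every nonempty $S\subseteq\{1,\dots,n\}$ let $x_S$ be a prevision value assigned to $\mathscr C_S=\bigwedge_{i\in S}(E_i|H_i)$ (defined recursively, $\mathscr C_{\{i\}}=E_i|H_i$, $x_{\{i\}}=x_i$). Then $\mathscr C_{1\cdots n}$ is the random quantity equal to $1$ if $\bigwedge_{i=1}^nE_iH_i$ is true; $0$ if $\bigvee_{i=1}^n\bar E_iH_i$ is true; $x_S$ if $(\bigwedge_{i\in S}\bar H_i)\wedge(\bigwedge_{i\notin S}E_iH_i)$ is true, for each nonempty strict subset $S$; and $x_{1\cdots n}=\mathbb P(\mathscr C_{1\cdots n})$ if $\bigwedge_{i=1}^n\bar H_i$ is true. The values $x_S$ of the strict sub-conjunctions are fixed (coherently assessed) beforehand; the statement concerns the assessment on $\mathcal F$. *)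

theory Defs
  imports "HOL-Analysis.Analysis"
begin

definition ind :: "'w set \<Rightarrow> 'w \<Rightarrow> real" where
  "ind A w = (if w \<in> A then 1 else 0)"

definition log_indep :: "nat \<Rightarrow> (nat \<Rightarrow> 'w set) \<Rightarrow> (nat \<Rightarrow> 'w set) \<Rightarrow> bool" where
  "log_indep n E H \<longleftrightarrow>
     (\<forall>a b :: nat \<Rightarrow> bool.
        (\<Inter>i\<in>{1..n}. (if a i then E i else - E i) \<inter> (if b i then H i else - H i)) \<noteq> {})"

text \<open>Value at outcome w of the conjunction of E_i|H_i, i in S, where x T is the prevision
  value assigned to the sub-conjunction indexed by T (with x {i} = P(E_i|H_i)).\<close>
definition conj_rq :: "(nat \<Rightarrow> 'w set) \<Rightarrow> (nat \<Rightarrow> 'w set) \<Rightarrow> (nat set \<Rightarrow> real)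
    \<Rightarrow> nat set \<Rightarrow> 'w \<Rightarrow> real" where
  "conj_rq E H x S w =
     (if \<forall>i\<in>S. w \<in> E i \<inter> H i then 1
      else if \<exists>i\<in>S. w \<in> H i - E i then 0
      else x {i\<in>S. w \<notin> H i})"

definition coherent :: "'k set \<Rightarrow> ('k \<Rightarrow> 'w \<Rightarrow> real) \<Rightarrow> ('k \<Rightarrow> 'w set) \<Rightarrow> ('k \<Rightarrow> real) \<Rightarrow> bool" where
  "coherent K X Hc mu \<longleftrightarrow>
     (\<forall>J. J \<subseteq> K \<longrightarrow> J \<noteq> {} \<longrightarrow> (\<forall>s :: 'k \<Rightarrow> real.
        let G = (\<lambda>w. \<Sum>j\<in>J. s j * ind (Hc j) w * (X j w - mu j)) in
        (\<exists>w\<in>(\<Union>j\<in>J. Hc j). G w \<le> 0) \<and> (\<exists>w\<in>(\<Union>j\<in>J. Hc j). G w \<ge> 0)))"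

text \<open>The family {E_i|H_i : i in S} \<union> {C_S}, indexed by S (for the conditional events) and
  index 0 (for the conjunction C_S, whose conditioning event is the disjunction of the H_i).\<close>
definition famX :: "(nat \<Rightarrow> 'w set) \<Rightarrow> (nat \<Rightarrow> 'w set) \<Rightarrow> (nat set \<Rightarrow> real) \<Rightarrow> nat set
    \<Rightarrow> nat \<Rightarrow> 'w \<Rightarrow> real" where
  "famX E H x S k = (if k = 0 then conj_rq E H x S else ind (E k))"

definition famH :: "(nat \<Rightarrow> 'w set) \<Rightarrow> nat set \<Rightarrow> nat \<Rightarrow> 'w set" where
  "famH H S k = (if k = 0 then (\<Union>i\<in>S. H i) else H k)"

definition famMu :: "(nat set \<Rightarrow> real) \<Rightarrow> nat set \<Rightarrow> nat \<Rightarrow> real" where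
  "famMu x S k = (if k = 0 then x S else x {k})"

definition conj_assessment_coherent ::
  "(nat \<Rightarrow> 'w set) \<Rightarrow> (nat \<Rightarrow> 'w set) \<Rightarrow> (nat set \<Rightarrow> real) \<Rightarrow> nat set \<Rightarrow> bool" where
  "conj_assessment_coherent E H x S \<longleftrightarrow>
     coherent (insert 0 S) (famX E H x S) (famH H S) (famMu x S)"

text \<open>Membership of (m_1,..,m_n,m_0) (coordinates 1..n and 0) in the convex hull I* of the
  points (q_1,..,q_n, q_1*...*q_n), q in {0,1}^n: a convex combination of these finitely
  many points (literal unfolding of the convex hull of a finite set).\<close>
definition in_Istar :: "nat \<Rightarrow> (nat \<Rightarrow> real) \<Rightarrow> bool" where
  "in_Istar n m \<longleftrightarrow>
     (\<exists>lam :: (nat \<Rightarrow> real) \<Rightarrow> real.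
        (\<forall>q\<in>{1..n} \<rightarrow>\<^sub>E {0,1}. lam q \<ge> 0) \<and>
        (\<Sum>q\<in>{1..n} \<rightarrow>\<^sub>E {0,1}. lam q) = 1 \<and>
        (\<forall>i\<in>{1..n}. (\<Sum>q\<in>{1..n} \<rightarrow>\<^sub>E {0,1}. lam q * q i) = m i) \<and>
        (\<Sum>q\<in>{1..n} \<rightarrow>\<^sub>E {0,1}. lam q * (\<Prod>i\<in>{1..n}. q i)) = m 0)"

end

theory Submission
  imports Defs
begin

text \<open>Each vertex q of I* is the value of the family at an outcome where every H_i is true and
  E_i is true exactly when q_i = 1; such outcomes exist by logical independence. If the assessment
  is a convex combination of these values, the same weights average every random gain to 0, so no
  gain can be uniformly positive or uniformly negative.\<close>

lemma convex_combination_zero_sign_change: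
  fixes lam f :: "'q \<Rightarrow> real"
  assumes "finite P" and "\<forall>q\<in>P. lam q \<ge> 0" and "(\<Sum>q\<in>P. lam q) = 1"
    and "(\<Sum>q\<in>P. lam q * f q) = 0"
  shows "\<exists>q\<in>P. f q \<le> 0" and "\<exists>q\<in>P. f q \<ge> 0"
proof -
  obtain q0 where q0: "q0 \<in> P" "lam q0 > 0"
    using assms(2,3) sum_nonpos[of P lam] by (metis less_eq_real_def not_le zero_less_one)
  have no_strict_sign: "\<exists>q\<in>P. g q \<le> 0" if "(\<Sum>q\<in>P. lam q * g q) = 0" for g :: "'q \<Rightarrow> real"
  proof (rule ccontr)
    assume "\<not> (\<exists>q\<in>P. g q \<le> 0)"
    then have "\<forall>q\<in>P. g q > 0" by auto
    then have "0 < (\<Sum>q\<in>P. lam q * g q)"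
      using q0 assms(1,2) by (intro sum_pos2[of P q0]) auto
    with that show False by simp
  qed
  show "\<exists>q\<in>P. f q \<le> 0" using no_strict_sign assms(4) .
  have "(\<Sum>q\<in>P. lam q * - f q) = 0" using assms(4) by (simp add: sum_negf)
  then show "\<exists>q\<in>P. f q \<ge> 0" using no_strict_sign[of "\<lambda>q. - f q"] by auto
qed

lemma coherent_if_convex_combination_of_values:
  fixes P :: "'q set" and w :: "'q \<Rightarrow> 'w" and lam :: "'q \<Rightarrow> real"
  assumes "finite P" and "\<forall>q\<in>P. lam q \<ge> 0" and "(\<Sum>q\<in>P. lam q) = 1"
    and in_cond: "\<And>q k. k \<in> K \<Longrightarrow> w q \<in> Hc k"
    and average: "\<And>k. k \<in> K \<Longrightarrow> (\<Sum>q\<in>P. lam q * X k (w q)) = mu k"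
  shows "coherent K X Hc mu"
  unfolding coherent_def Let_def
proof (intro allI impI)
  fix J s assume J: "J \<subseteq> K" "J \<noteq> {}"
  define G where "G v = (\<Sum>j\<in>J. s j * ind (Hc j) v * (X j v - mu j))" for v
  have G_at: "G (w q) = (\<Sum>j\<in>J. s j * (X j (w q) - mu j))" for q
    unfolding G_def using J(1) in_cond by (intro sum.cong) (auto simp: ind_def)
  have "(\<Sum>q\<in>P. lam q * G (w q)) = (\<Sum>j\<in>J. \<Sum>q\<in>P. s j * (lam q * X j (w q) - lam q * mu j))"
    unfolding G_at sum_distrib_left by (subst sum.swap) (simp add: algebra_simps)
  also have "\<dots> = (\<Sum>j\<in>J. s j * ((\<Sum>q\<in>P. lam q * X j (w q)) - (\<Sum>q\<in>P. lam q) * mu j))"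
    by (simp add: sum_subtractf sum_distrib_left sum_distrib_right right_diff_distrib mult_ac)
  also have "\<dots> = 0" using J(1) average assms(3) by (intro sum.neutral) auto
  finally have "(\<Sum>q\<in>P. lam q * G (w q)) = 0" .
  note signs = convex_combination_zero_sign_change[OF assms(1-3) this]
  have "w q \<in> (\<Union>j\<in>J. Hc j)" for q using J in_cond by blast
  then show "(\<exists>v\<in>(\<Union>j\<in>J. Hc j). G v \<le> 0) \<and> (\<exists>v\<in>(\<Union>j\<in>J. Hc j). G v \<ge> 0)"
    using signs by blast
qed

lemma log_indep_scenario_exists:
  assumes "log_indep n E H"
  shows "\<exists>v. \<forall>i\<in>{1..n}. v \<in> H i \<and> (v \<in> E i \<longleftrightarrow> a i)"
proof -
  have "(\<Inter>i\<in>{1..n}. (if a i then E i else - E i) \<inter> H i) \<noteq> {}"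
    using assms[unfolded log_indep_def, rule_format, of a "\<lambda>_. True"] by simp
  then obtain v where "v \<in> (\<Inter>i\<in>{1..n}. (if a i then E i else - E i) \<inter> H i)" by blast
  then show ?thesis by (intro exI[of _ v]) (auto split: if_splits)
qed

lemma famX_at_scenario:
  assumes q: "q \<in> {1..n} \<rightarrow>\<^sub>E {0, 1}"
    and v_H: "\<And>i. i \<in> {1..n} \<Longrightarrow> v \<in> H i"
    and v_E: "\<And>i. i \<in> {1..n} \<Longrightarrow> v \<in> E i \<longleftrightarrow> q i = 1"
    and k: "k \<in> insert 0 {1..n}"
  shows "famX E H x {1..n} k v = (if k = 0 then (\<Prod>i\<in>{1..n}. q i) else q k)"
proof (cases "k = 0")
  case True
  show ?thesis
  proof (cases "\<forall>i\<in>{1..n}. q i = 1")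
    case True
    then show ?thesis using \<open>k = 0\<close> v_E v_H by (simp add: famX_def conj_rq_def)
  next
    case False
    then obtain i where i: "i \<in> {1..n}" "q i = 0" using q by fastforce
    then have "(\<Prod>i\<in>{1..n}. q i) = 0" by (metis finite_atLeastAtMost prod_zero_iff)
    moreover have "\<exists>i\<in>{1..n}. v \<in> H i - E i" using i v_E v_H by force
    ultimately show ?thesis using \<open>k = 0\<close> by (auto simp: famX_def conj_rq_def)
  qed
next
  case False
  with k q v_E show ?thesis by (auto simp: famX_def ind_def)
qed

theorem theorem9:
  fixes n :: nat and E H :: "nat \<Rightarrow> 'w set" and x :: "nat set \<Rightarrow> real"
  assumes "n \<ge> 2"
    and "log_indep n E H"
    and "\<forall>i\<in>{1..n}. H i \<noteq> {}"
    and "\<forall>S. S \<subseteq> {1..n} \<longrightarrow> card S \<ge> 2 \<longrightarrow> S \<noteq> {1..n} \<longrightarrow>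
           conj_assessment_coherent E H x S"
    and "in_Istar n (\<lambda>k. if k = 0 then x {1..n} else x {k})"
  shows "conj_assessment_coherent E H x {1..n}"
proof -
  define P where "P = {1..n} \<rightarrow>\<^sub>E {0::real, 1}"
  obtain lam where lam: "\<forall>q\<in>P. lam q \<ge> 0" "(\<Sum>q\<in>P. lam q) = 1"
    and lam_i: "\<forall>i\<in>{1..n}. (\<Sum>q\<in>P. lam q * q i) = x {i}"
    and lam_0: "(\<Sum>q\<in>P. lam q * (\<Prod>i\<in>{1..n}. q i)) = x {1..n}"
    using assms(5) unfolding in_Istar_def P_def by auto
  have "\<forall>q :: nat \<Rightarrow> real. \<exists>v. \<forall>i\<in>{1..n}. v \<in> H i \<and> (v \<in> E i \<longleftrightarrow> q i = 1)"
    by (intro allI log_indep_scenario_exists[OF assms(2)])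
  then obtain w :: "(nat \<Rightarrow> real) \<Rightarrow> 'w"
    where "\<forall>q. \<forall>i\<in>{1..n}. w q \<in> H i \<and> (w q \<in> E i \<longleftrightarrow> q i = 1)"
    by (metis (no_types) choice)
  then have w_H: "\<And>q i. i \<in> {1..n} \<Longrightarrow> w q \<in> H i"
    and w_E: "\<And>q i. i \<in> {1..n} \<Longrightarrow> w q \<in> E i \<longleftrightarrow> q i = 1" by auto
  have "1 \<in> {1..n}" using assms(1) by simp
  then have in_cond: "w q \<in> famH H {1..n} k" if "k \<in> insert 0 {1..n}" for q k
    using that w_H by (auto simp: famH_def)
  have average: "(\<Sum>q\<in>P. lam q * famX E H x {1..n} k (w q)) = famMu x {1..n} k"
    if k: "k \<in> insert 0 {1..n}" for k
  proof -
    have "(\<Sum>q\<in>P. lam q * famX E H x {1..n} k (w q))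
        = (\<Sum>q\<in>P. lam q * (if k = 0 then (\<Prod>i\<in>{1..n}. q i) else q k))"
      using famX_at_scenario[OF _ w_H w_E k] unfolding P_def by (intro sum.cong) auto
    then show ?thesis using lam_i lam_0 k by (auto simp: famMu_def)
  qed
  have "finite P" unfolding P_def by (simp add: finite_PiE)
  then show ?thesis
    unfolding conj_assessment_coherent_def
    by (rule coherent_if_convex_combination_of_values[OF _ lam in_cond average])
qed

end
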